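(* There exists a sequence $\{a_n\}_{n\geq 0}$ with $a_n\in\{0,1\}$ for all $n$ such that $\{a^*_n\}_{n\geq 0}$ converges to $0$ and $\{a^p_n\}_{n\geq 0}$ diverges for every $0<p<1$.
   Context: For a real sequence $\{a_n\}_{n\geq0}$ and $0<p<1$, $a^*_n=\frac{1}{n+1}\sum_{i=0}^n a_i$ and $a^p_n=\sum_{i=0}^n\binom{n}{i}p^i(1-p)^{n-i}a_i$. *)

theory Defs
  imports Complex_Main
begin

definition cesaro_mean :: "(nat \<Rightarrow> real) \<Rightarrow> nat \<Rightarrow> real" where
  "cesaro_mean a n = (1 / real (n + 1)) * (\<Sum>i=0..n. a i)"

definition binomial_mean :: "real \<Rightarrow> (nat \<Rightarrow> real) \<Rightarrow> nat \<Rightarrow> real" where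
  "binomial_mean p a n = (\<Sum>i=0..n. real (n choose i) * p ^ i * (1 - p) ^ (n - i) * a i)"

end

theory Submission
  imports Defs "HOL-Analysis.Weierstrass_Theorems" "HOL-Real_Asymp.Real_Asymp"
begin

text \<open>Let \<open>a\<close> be the indicator of the blocks \<open>[4^k - k 2^k, 4^k + k 2^k]\<close>. Below \<open>N\<close> only
  the blocks with \<open>4^k \<le> 2N\<close> occur, and they contain \<open>O(log\<^sup>2 N \<cdot> \<surd>N)\<close> integers, so the
  Cesaro means tend to \<open>0\<close>. The binomial mean \<open>a\<^sup>p\<^sub>n\<close> is the expectation of \<open>a\<close> at a
  binomial \<open>(n, p)\<close> variable, which has mean \<open>np\<close> and variance \<open>np(1 - p) \<le> np\<close>. By
  Chebyshev's inequality, for \<open>n \<approx> 4^k/p\<close> it lies in the \<open>k\<close>-th block (radius \<open>k 2^k\<close>,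
  against a standard deviation of order \<open>2^k\<close>) with probability \<open>\<ge> 1 - 4/k\<^sup>2\<close>, while for
  \<open>n \<approx> 2 \<cdot> 4^k/p\<close> it stays at distance \<open>\<ge> 4^k/2\<close> from all blocks with probability
  \<open>\<ge> 1 - 32/4^k\<close>. Hence \<open>a\<^sup>p\<^sub>n\<close> has the two limit points \<open>1\<close> and \<open>0\<close>.\<close>

lemma binomial_mean_Bernstein: "binomial_mean p a n = (\<Sum>k\<le>n. Bernstein n k p * a k)"
  by (simp add: binomial_mean_def Bernstein_def atMost_atLeast0)

lemma binomial_mean_one_minus: "binomial_mean p (\<lambda>k. 1 - a k) n = 1 - binomial_mean p a n"
  by (simp add: binomial_mean_Bernstein right_diff_distrib sum_subtractf)

lemma binomial_mean_nonneg:
  "0 \<le> p \<Longrightarrow> p \<le> 1 \<Longrightarrow> (\<And>k. 0 \<le> a k) \<Longrightarrow> 0 \<le> binomial_mean p a n"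
  by (simp add: binomial_mean_Bernstein sum_nonneg Bernstein_nonneg)

lemma binomial_mean_le_one:
  assumes "0 \<le> p" "p \<le> 1" "\<And>k. a k \<le> 1"
  shows "binomial_mean p a n \<le> 1"
  using binomial_mean_nonneg[of p "\<lambda>k. 1 - a k" n] assms by (simp add: binomial_mean_one_minus)

lemma sum_square_deviation_Bernstein:
  "(\<Sum>k\<le>n. (real k - n * x)\<^sup>2 * Bernstein n k x) = n * x * (1 - x)"
proof -
  have "(\<Sum>k\<le>n. (real k - n * x)\<^sup>2 * Bernstein n k x) =
      (\<Sum>k\<le>n. real k * (real k - 1) * Bernstein n k x
        + (1 - 2 * n * x) * (real k * Bernstein n k x) + (n * x)\<^sup>2 * Bernstein n k x)"
    by (rule sum.cong) (simp_all add: algebra_simps power2_eq_square)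
  also have "\<dots> = real n * (real n - 1) * x\<^sup>2 + (1 - 2 * n * x) * (n * x) + (n * x)\<^sup>2"
    by (simp add: sum.distrib flip: sum_distrib_left)
  also have "\<dots> = n * x * (1 - x)"
    by (simp add: algebra_simps power2_eq_square)
  finally show ?thesis .
qed

text \<open>Chebyshev's inequality: pointwise \<open>a k \<le> (k - np)\<^sup>2 / t\<^sup>2\<close>, and the binomial variance
  is \<open>np(1 - p)\<close>.\<close>

lemma binomial_mean_le_if_zero_near_mean:
  assumes "0 \<le> p" "p \<le> 1" "0 < t" and a: "\<And>k. 0 \<le> a k" "\<And>k. a k \<le> 1"
    and zero: "\<And>k. \<bar>real k - n * p\<bar> < t \<Longrightarrow> a k = 0"
  shows "binomial_mean p a n \<le> n * p * (1 - p) / t\<^sup>2"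
proof -
  have "a k \<le> (real k - n * p)\<^sup>2 / t\<^sup>2" for k
  proof (cases "\<bar>real k - n * p\<bar> < t")
    case False
    then have "t\<^sup>2 \<le> (real k - n * p)\<^sup>2"
      using \<open>0 < t\<close> by (simp add: abs_le_square_iff[symmetric])
    then have "1 \<le> (real k - n * p)\<^sup>2 / t\<^sup>2"
      using \<open>0 < t\<close> by simp
    then show ?thesis using a(2)[of k] by linarith
  qed (simp add: zero)
  then have "binomial_mean p a n \<le> (\<Sum>k\<le>n. Bernstein n k p * ((real k - n * p)\<^sup>2 / t\<^sup>2))"
    unfolding binomial_mean_Bernstein
    by (intro sum_mono mult_left_mono) (simp_all add: Bernstein_nonneg assms)
  also have "\<dots> = (\<Sum>k\<le>n. (real k - n * p)\<^sup>2 * Bernstein n k p) / t\<^sup>2"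
    by (simp add: sum_divide_distrib mult.commute)
  also have "\<dots> = n * p * (1 - p) / t\<^sup>2"
    by (simp only: sum_square_deviation_Bernstein)
  finally show ?thesis .
qed

lemma binomial_mean_ge_if_one_near_mean:
  assumes "0 \<le> p" "p \<le> 1" "0 < t" and "\<And>k. 0 \<le> a k" "\<And>k. a k \<le> 1"
    and "\<And>k. \<bar>real k - n * p\<bar> < t \<Longrightarrow> a k = 1"
  shows "1 - n * p * (1 - p) / t\<^sup>2 \<le> binomial_mean p a n"
  using binomial_mean_le_if_zero_near_mean[of p t "\<lambda>k. 1 - a k" n] assms
  by (simp add: binomial_mean_one_minus)

lemma nat_floor_divide_mult_bounds:
  fixes c p :: real
  assumes "0 < p" "0 \<le> c"
  shows "c - p < real (nat \<lfloor>c / p\<rfloor>) * p" "real (nat \<lfloor>c / p\<rfloor>) * p \<le> c"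
proof -
  have n: "real (nat \<lfloor>c / p\<rfloor>) = of_int \<lfloor>c / p\<rfloor>"
    using assms by simp
  have "(c / p - 1) * p < of_int \<lfloor>c / p\<rfloor> * p"
    using assms by (intro mult_strict_right_mono) linarith+
  then show "c - p < real (nat \<lfloor>c / p\<rfloor>) * p"
    unfolding n using assms by (simp add: algebra_simps)
  have "of_int \<lfloor>c / p\<rfloor> * p \<le> c / p * p"
    using assms by (intro mult_right_mono) linarith+
  then show "real (nat \<lfloor>c / p\<rfloor>) * p \<le> c"
    unfolding n using assms by simp
qed

lemma filterlim_nat_floor_sequentially:
  "filterlim f at_top sequentially \<Longrightarrow> filterlim (\<lambda>k. nat \<lfloor>f k\<rfloor>) at_top sequentially"
  using filterlim_compose[OF filterlim_nat_sequentially
        filterlim_compose[OF filterlim_floor_sequentially]] by blast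

lemma not_convergent_two_limits:
  fixes f :: "nat \<Rightarrow> 'a::t2_space"
  assumes "filterlim g at_top sequentially" "filterlim h at_top sequentially"
    and "(\<lambda>k. f (g k)) \<longlonglongrightarrow> a" "(\<lambda>k. f (h k)) \<longlonglongrightarrow> b" "a \<noteq> b"
  shows "\<not> convergent f"
proof
  assume "convergent f"
  then obtain l where "f \<longlonglongrightarrow> l" by (auto simp: convergent_def)
  then have "(\<lambda>k. f (g k)) \<longlonglongrightarrow> l" "(\<lambda>k. f (h k)) \<longlonglongrightarrow> l"
    using assms(1,2) by (auto intro: filterlim_compose)
  with assms(3-5) show False using LIMSEQ_unique by metis
qed

lemma four_mul_le_two_power: "4 \<le> k \<Longrightarrow> 4 * k \<le> (2::nat) ^ k"
proof (induction k rule: dec_induct)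
  case (step k)
  have "4 \<le> (2::nat) ^ k"
    using power_increasing[of 2 k "2::nat"] step(1) by simp
  with step show ?case by simp
qed simp

lemma two_mul_le_two_power: "2 * k \<le> (2::nat) ^ k"
proof (cases "4 \<le> k")
  case False
  then have "k \<in> {0, 1, 2, 3}" by auto
  then show ?thesis by auto
qed (use four_mul_le_two_power in fastforce)

lemma mult_two_power_le_four_power_nat: "k * 2 ^ k \<le> (4::nat) ^ k"
  using mult_le_mono1[OF less_imp_le[OF less_exp], of k "2 ^ k"]
  by (simp flip: power_mult_distrib)

lemma mult_two_power_le_four_power:
  assumes "c * k \<le> (2::nat) ^ k"
  shows "real c * (real k * 2 ^ k) \<le> 4 ^ k"
proof -
  have "real c * real k * 2 ^ k \<le> 2 ^ k * 2 ^ k"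
    using assms by (intro mult_right_mono) (simp_all flip: of_nat_mult of_nat_le_iff)
  then show ?thesis by (simp add: mult.assoc flip: power_mult_distrib)
qed

definition block :: "nat \<Rightarrow> nat set" where
  "block k = {4 ^ k - k * 2 ^ k .. 4 ^ k + k * 2 ^ k}"

definition block_seq :: "nat \<Rightarrow> real" where
  "block_seq = indicator (\<Union>k. block k)"

lemma block_seq_01: "block_seq i \<in> {0, 1}"
  by (simp add: block_seq_def split: split_indicator)

lemma mem_block_iff: "i \<in> block k \<longleftrightarrow> \<bar>real i - 4 ^ k\<bar> \<le> real k * 2 ^ k"
proof -
  have "real (4 ^ k - k * 2 ^ k) = 4 ^ k - real k * 2 ^ k"
    using mult_two_power_le_four_power_nat by (simp add: of_nat_diff)
  moreover have "i \<in> block k \<longleftrightarrow> real (4 ^ k - k * 2 ^ k) \<le> real i \<and> real i \<le> real (4 ^ k + k * 2 ^ k)"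
    unfolding block_def of_nat_le_iff by simp
  ultimately show ?thesis
    by (simp add: abs_le_iff) linarith
qed

lemma card_block: "card (block k) = 2 * k * 2 ^ k + 1"
  using mult_two_power_le_four_power_nat by (simp add: block_def)

lemma block_seq_eq_1: "\<bar>real i - 4 ^ k\<bar> \<le> real k * 2 ^ k \<Longrightarrow> block_seq i = 1"
  by (auto simp: block_seq_def mem_block_iff split: split_indicator)

lemma four_power_le_if_mem_block: "i \<in> block k \<Longrightarrow> 4 ^ k \<le> 2 * real i"
  using mult_two_power_le_four_power[OF two_mul_le_two_power, of k]
  by (simp add: mem_block_iff abs_le_iff)

text \<open>Blocks \<open>j \<le> k\<close> end below \<open>3/2 \<cdot> 4^k\<close>; blocks \<open>j > k \<ge> 3\<close> have \<open>j \<ge> 4\<close>, hence radius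
  \<open>\<le> 4^j/4\<close>, and start above \<open>3 \<cdot> 4^k\<close>.\<close>

lemma block_seq_eq_0:
  assumes "3 \<le> k" "\<bar>real i - 2 * 4 ^ k\<bar> < 4 ^ k / 2"
  shows "block_seq i = 0"
proof (rule ccontr)
  assume "block_seq i \<noteq> 0"
  then obtain j where "i \<in> block j"
    by (auto simp: block_seq_def indicator_eq_0_iff)
  then have "\<bar>real i - 4 ^ j\<bar> \<le> real j * 2 ^ j"
    by (simp add: mem_block_iff)
  show False
  proof (cases "j \<le> k")
    case True
    have "real j * 2 ^ j \<le> real k * 2 ^ k" "(4::real) ^ j \<le> 4 ^ k"
      using True by (auto intro!: mult_mono power_increasing)
    moreover have "2 * (real k * 2 ^ k) \<le> 4 ^ k"
      using mult_two_power_le_four_power[OF two_mul_le_two_power] by simp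
    ultimately show False using assms \<open>\<bar>real i - 4 ^ j\<bar> \<le> _\<close> by linarith
  next
    case False
    have "(4::real) ^ Suc k \<le> 4 ^ j"
      using False by (intro power_increasing) auto
    moreover have "4 * (real j * 2 ^ j) \<le> 4 ^ j"
      using mult_two_power_le_four_power[OF four_mul_le_two_power] False assms by simp
    ultimately show False using assms \<open>\<bar>real i - 4 ^ j\<bar> \<le> _\<close> by simp
  qed
qed

lemma binomial_mean_block_seq_at_power_ge:
  assumes p: "0 < p" "p < 1" and "1 \<le> k"
  shows "1 - 4 / real k ^ 2 \<le> binomial_mean p block_seq (nat \<lfloor>4 ^ k / p\<rfloor>)"
proof -
  define n where "n = nat \<lfloor>4 ^ k / p\<rfloor>"
  define r where "r = real k * 2 ^ k"
  have np: "4 ^ k - p < n * p" "n * p \<le> 4 ^ k"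
    using nat_floor_divide_mult_bounds[of p "4 ^ k"] p by (simp_all add: n_def)
  have "2 \<le> r"
    using \<open>1 \<le> k\<close> power_increasing[of 1 k "2::real"] mult_mono[of 1 "real k" 2 "2 ^ k"]
    by (simp add: r_def)
  have "1 - n * p * (1 - p) / (r - 1)\<^sup>2 \<le> binomial_mean p block_seq n"
  proof (rule binomial_mean_ge_if_one_near_mean)
    fix i
    assume "\<bar>real i - n * p\<bar> < r - 1"
    then have "\<bar>real i - 4 ^ k\<bar> \<le> real k * 2 ^ k"
      using np p unfolding r_def abs_less_iff abs_le_iff by (intro conjI) linarith+
    then show "block_seq i = 1"
      by (rule block_seq_eq_1)
  qed (use p \<open>2 \<le> r\<close> in \<open>auto simp: block_seq_def\<close>)
  moreover have "n * p * (1 - p) / (r - 1)\<^sup>2 \<le> 4 ^ k / (r / 2)\<^sup>2"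
  proof (rule frac_le)
    show "n * p * (1 - p) \<le> 4 ^ k"
      using np p mult_left_le[of "1 - p" "n * p"] by simp
    show "(r / 2)\<^sup>2 \<le> (r - 1)\<^sup>2"
      using \<open>2 \<le> r\<close> by (intro power_mono) auto
  qed (use \<open>2 \<le> r\<close> in auto)
  moreover have "4 ^ k / (r / 2)\<^sup>2 = 4 / real k ^ 2"
    using \<open>1 \<le> k\<close> by (simp add: r_def field_simps power2_eq_square flip: power_mult_distrib)
  ultimately show ?thesis
    unfolding n_def by linarith
qed

lemma binomial_mean_block_seq_at_double_power_le:
  assumes p: "0 < p" "p < 1" and "3 \<le> k"
  shows "binomial_mean p block_seq (nat \<lfloor>2 * 4 ^ k / p\<rfloor>) \<le> 32 / 4 ^ k"
proof -
  define n where "n = nat \<lfloor>2 * 4 ^ k / p\<rfloor>"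
  have np: "2 * 4 ^ k - p < n * p" "n * p \<le> 2 * 4 ^ k"
    using nat_floor_divide_mult_bounds[of p "2 * 4 ^ k"] p by (simp_all add: n_def)
  have "(64::real) \<le> 4 ^ k"
    using \<open>3 \<le> k\<close> power_increasing[of 3 k "4::real"] by simp
  have "binomial_mean p block_seq n \<le> n * p * (1 - p) / (4 ^ k / 4)\<^sup>2"
  proof (rule binomial_mean_le_if_zero_near_mean)
    fix i
    assume "\<bar>real i - n * p\<bar> < 4 ^ k / 4"
    then have "\<bar>real i - 2 * 4 ^ k\<bar> < 4 ^ k / 2"
      using np p \<open>64 \<le> 4 ^ k\<close> unfolding abs_less_iff by (intro conjI) linarith+
    then show "block_seq i = 0"
      by (rule block_seq_eq_0[OF \<open>3 \<le> k\<close>])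
  qed (use p in \<open>auto simp: block_seq_def\<close>)
  also have "\<dots> \<le> 2 * 4 ^ k / (4 ^ k / 4)\<^sup>2"
    using np p mult_left_le[of "1 - p" "n * p"] by (intro divide_right_mono) auto
  also have "\<dots> = 32 / 4 ^ k"
    by (simp add: field_simps power2_eq_square)
  finally show ?thesis
    unfolding n_def .
qed

lemma sum_block_seq_le:
  assumes "1 \<le> N"
  defines "L \<equiv> log 4 (2 * real N)"
  shows "(\<Sum>i=0..N. block_seq i) \<le> (L + 1) * (2 * L * sqrt (2 * real N) + 1)"
proof -
  define K where "K = nat \<lfloor>L\<rfloor>"
  have "0 \<le> L"
    using assms by (simp add: L_def)
  have "real K \<le> L"
    using \<open>0 \<le> L\<close> by (simp add: K_def)
  have "k \<le> K" if "i \<le> N" "i \<in> block k" for i k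
  proof -
    have "4 ^ k \<le> 2 * real N"
      using four_power_le_if_mem_block[OF that(2)] that(1) by simp
    then have "real k \<le> L"
      unfolding L_def using assms by (simp add: le_log_iff powr_realpow)
    then show ?thesis
      by (simp add: K_def le_nat_floor)
  qed
  then have "{0..N} \<inter> (\<Union>k. block k) \<subseteq> (\<Union>k\<le>K. block k)"
    by fastforce
  then have "card ({0..N} \<inter> (\<Union>k. block k)) \<le> card (\<Union>k\<le>K. block k)"
    by (intro card_mono) (auto simp: block_def)
  also have "\<dots> \<le> (\<Sum>k\<le>K. card (block k))"
    by (rule card_UN_le) simp
  also have "\<dots> \<le> (\<Sum>k\<le>K. 2 * K * 2 ^ K + 1)"
    unfolding card_block by (intro sum_mono add_right_mono mult_mono power_increasing) auto
  also have "\<dots> = (K + 1) * (2 * K * 2 ^ K + 1)"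
    by simp
  finally have "real (card ({0..N} \<inter> (\<Union>k. block k))) \<le> real ((K + 1) * (2 * K * 2 ^ K + 1))"
    by (simp only: of_nat_le_iff)
  moreover have "(\<Sum>i=0..N. block_seq i) = real (card ({0..N} \<inter> (\<Union>k. block k)))"
    using sum_mult_indicator[of "{0..N}" "\<lambda>_. 1::real" "\<Union>k. block k"] by (simp add: block_seq_def)
  ultimately have "(\<Sum>i=0..N. block_seq i) \<le> (real K + 1) * (2 * real K * 2 ^ K + 1)"
    by (simp add: algebra_simps)
  also have "\<dots> \<le> (L + 1) * (2 * L * sqrt (2 * real N) + 1)"
  proof -
    have "4 ^ K \<le> 2 * real N"
      using \<open>real K \<le> L\<close> assms by (simp add: L_def le_log_iff powr_realpow)
    then have "(2 ^ K)\<^sup>2 \<le> 2 * real N"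
      by (simp add: power2_eq_square flip: power_mult_distrib)
    then have "2 ^ K \<le> sqrt (2 * real N)"
      by (rule real_le_rsqrt)
    then show ?thesis
      using \<open>real K \<le> L\<close> \<open>0 \<le> L\<close>
      by (intro mult_mono add_mono order.refl) auto
  qed
  finally show ?thesis .
qed

lemma cesaro_mean_block_seq: "cesaro_mean block_seq \<longlonglongrightarrow> 0"
proof -
  define bound where "bound x = (log 4 (2 * x) + 1) * (2 * log 4 (2 * x) * sqrt (2 * x) + 1) / (x + 1)"
    for x :: real
  have "(bound \<longlongrightarrow> 0) at_top"
    unfolding bound_def by real_asymp
  show ?thesis
  proof (rule tendsto_sandwich[OF _ _ tendsto_const])
    show "(\<lambda>N. bound (real N)) \<longlonglongrightarrow> 0"
      using \<open>(bound \<longlongrightarrow> 0) at_top\<close> filterlim_real_sequentially by (rule filterlim_compose)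
    show "\<forall>\<^sub>F N in sequentially. 0 \<le> cesaro_mean block_seq N"
      by (simp add: cesaro_mean_def block_seq_def sum_nonneg)
    have "cesaro_mean block_seq N \<le> bound (real N)" if "1 \<le> N" for N
      using sum_block_seq_le[OF that]
      by (simp add: cesaro_mean_def bound_def divide_right_mono add.commute)
    then show "\<forall>\<^sub>F N in sequentially. cesaro_mean block_seq N \<le> bound (real N)"
      by (auto intro: eventually_sequentiallyI)
  qed
qed

lemma tendsto_binomial_mean_block_seq_at_power:
  assumes "0 < p" "p < 1"
  shows "(\<lambda>k. binomial_mean p block_seq (nat \<lfloor>4 ^ k / p\<rfloor>)) \<longlonglongrightarrow> 1"
proof (rule tendsto_sandwich[OF _ _ _ tendsto_const])
  show "(\<lambda>k. 1 - 4 / real k ^ 2) \<longlonglongrightarrow> 1"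
    by real_asymp
  show "\<forall>\<^sub>F k in sequentially. 1 - 4 / real k ^ 2 \<le> binomial_mean p block_seq (nat \<lfloor>4 ^ k / p\<rfloor>)"
    using binomial_mean_block_seq_at_power_ge[OF assms] by (auto intro: eventually_sequentiallyI)
  show "\<forall>\<^sub>F k in sequentially. binomial_mean p block_seq (nat \<lfloor>4 ^ k / p\<rfloor>) \<le> 1"
    using assms by (simp add: binomial_mean_le_one block_seq_def)
qed

lemma tendsto_binomial_mean_block_seq_at_double_power:
  assumes "0 < p" "p < 1"
  shows "(\<lambda>k. binomial_mean p block_seq (nat \<lfloor>2 * 4 ^ k / p\<rfloor>)) \<longlonglongrightarrow> 0"
proof (rule tendsto_sandwich[OF _ _ tendsto_const])
  show "(\<lambda>k. 32 / 4 ^ k :: real) \<longlonglongrightarrow> 0"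
    by real_asymp
  show "\<forall>\<^sub>F k in sequentially. 0 \<le> binomial_mean p block_seq (nat \<lfloor>2 * 4 ^ k / p\<rfloor>)"
    using assms by (simp add: binomial_mean_nonneg block_seq_def)
  show "\<forall>\<^sub>F k in sequentially. binomial_mean p block_seq (nat \<lfloor>2 * 4 ^ k / p\<rfloor>) \<le> 32 / 4 ^ k"
    using binomial_mean_block_seq_at_double_power_le[OF assms]
    by (auto intro: eventually_sequentiallyI[of 3])
qed

theorem proposition4:
  shows "\<exists>a :: nat \<Rightarrow> real. (\<forall>n. a n \<in> {0, 1}) \<and>
           cesaro_mean a \<longlonglongrightarrow> 0 \<and>
           (\<forall>p::real. 0 < p \<and> p < 1 \<longrightarrow> \<not> convergent (binomial_mean p a))"
proof (intro exI conjI allI impI)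
  show "block_seq n \<in> {0, 1}" for n
    by (rule block_seq_01)
  show "cesaro_mean block_seq \<longlonglongrightarrow> 0"
    by (rule cesaro_mean_block_seq)
  fix p :: real
  assume "0 < p \<and> p < 1"
  then have p: "0 < p" "p < 1" by auto
  have to_top: "filterlim (\<lambda>k. nat \<lfloor>4 ^ k / p\<rfloor>) at_top sequentially"
    "filterlim (\<lambda>k. nat \<lfloor>2 * 4 ^ k / p\<rfloor>) at_top sequentially"
    using p by (intro filterlim_nat_floor_sequentially; real_asymp)+
  show "\<not> convergent (binomial_mean p block_seq)"
    by (rule not_convergent_two_limits[OF to_top
          tendsto_binomial_mean_block_seq_at_power[OF p]
          tendsto_binomial_mean_block_seq_at_double_power[OF p]]) simp
qed

end
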